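(* Let $X,Y\sim\mathcal{N}(0,I_n)$ be independent Gaussian random vectors in $\mathbb{R}^n$ and let $\epsilon\in(0,1)$. Then $$\mathbb{P}\left\{|\langle X,Y\rangle|\ge\sqrt{n^{3/2}/(1-\epsilon)}\right\}\le e^{-\sqrt n/2}+2e^{-\epsilon^2 n/4}.$$ *)

theory Defs
  imports "HOL-Probability.Probability"
begin

end

theory Submission
  imports Defs
begin

(* Conditionally on Y = v, the inner product <X, v> is a centred Gaussian of variance |v|^2, so
   for all t > 0 and R

     P(|<X, Y>| >= t) <= P(|Y|^2 >= R) + exp (- t^2 / (2 R)).

   Take t^2 = n^(3/2) / (1 - eps) and R = n / (1 - eps): the second term becomes exp (- sqrt n / 2),
   and the first is a chi-square upper tail, which the Chernoff bound with E exp (s Y_i^2) =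
   (1 - 2 s)^(-1/2) at s = eps / 2, together with ln (1 - eps) >= eps^2 / 2 - eps / (1 - eps),
   bounds by exp (- eps^2 n / 4). *)

lemma ln_one_minus_lower_bound:
  fixes e :: real
  assumes "0 \<le> e" "e < 1"
  shows "e\<^sup>2 / 2 - e / (1 - e) \<le> ln (1 - e)"
proof -
  define f where "f x = x / (1 - x) + ln (1 - x) - x\<^sup>2 / 2" for x :: real
  have f_deriv: "(f has_real_derivative x / (1 - x)\<^sup>2 - x) (at x)" if "x < 1" for x
  proof -
    have "1 - x \<noteq> 0" "(1 - x)\<^sup>2 \<noteq> 0" using that by auto
    with that show ?thesis
      unfolding f_def
      by (auto intro!: derivative_eq_intros, simp add: divide_simps, simp add: power2_eq_square algebra_simps)
  qed
  have f_deriv_nonneg: "0 \<le> x / (1 - x)\<^sup>2 - x" if "0 \<le> x" "x < 1" for x :: real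
  proof -
    have "(1 - x)\<^sup>2 \<le> 1" using that by (simp add: power_le_one)
    then have "x * 1 \<le> x / (1 - x)\<^sup>2"
      using that by (simp add: field_simps mult_left_le)
    then show ?thesis by simp
  qed
  have "f 0 \<le> f e"
  proof (rule DERIV_nonneg_imp_nondecreasing[OF assms(1)])
    fix x assume "0 \<le> x" "x \<le> e"
    with assms show "\<exists>y. (f has_real_derivative y) (at x) \<and> 0 \<le> y"
      using f_deriv f_deriv_nonneg by fastforce
  qed
  then show ?thesis by (simp add: f_def)
qed

lemma std_normal_density_shift_le:
  fixes s x :: real
  assumes "0 \<le> s" "s \<le> \<bar>x\<bar>"
  shows "std_normal_density x \<le> exp (- s\<^sup>2 / 2) * std_normal_density (\<bar>x\<bar> - s)"
proof -
  have "s * s \<le> s * \<bar>x\<bar>" using assms by (simp add: mult_left_mono)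
  then have "- x\<^sup>2 / 2 \<le> - s\<^sup>2 / 2 + - (\<bar>x\<bar> - s)\<^sup>2 / 2"
    by (simp add: power2_eq_square algebra_simps)
  then show ?thesis
    by (simp add: std_normal_density_def field_simps flip: exp_add)
qed

lemma nn_integral_std_normal_halves:
  "(\<integral>\<^sup>+x. ennreal (std_normal_density x) * indicator {0..} x \<partial>lborel)
     + (\<integral>\<^sup>+x. ennreal (std_normal_density x) * indicator {..0} x \<partial>lborel) = 1"
proof -
  have "(\<integral>\<^sup>+x. ennreal (std_normal_density x) * indicator {0..} x \<partial>lborel)
     + (\<integral>\<^sup>+x. ennreal (std_normal_density x) * indicator {..0} x \<partial>lborel)
     = (\<integral>\<^sup>+x. ennreal (std_normal_density x) + ennreal (std_normal_density 0) * indicator {0} x \<partial>lborel)"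
    by (subst nn_integral_add[symmetric]) (auto intro!: nn_integral_cong simp: indicator_def)
  also have "\<dots> = 1"
    by (simp add: nn_integral_add nn_integral_cmult_indicator nn_integral_eq_integral)
  finally show ?thesis .
qed

(* The tail is dominated by exp (- s^2 / 2) times the density moved towards 0 by s, and the two
   moved halves together integrate to 1; so no factor 2 appears, unlike a two-sided Chernoff bound. *)
lemma nn_integral_std_normal_tail:
  fixes s :: real
  assumes "0 \<le> s"
  shows "(\<integral>\<^sup>+x. ennreal (std_normal_density x) * indicator {x. s \<le> \<bar>x\<bar>} x \<partial>lborel)
         \<le> exp (- s\<^sup>2 / 2)"
proof -
  define right where "right x = ennreal (std_normal_density (x - s)) * indicator {s..} x" for x
  define left where "left x = ennreal (std_normal_density (x + s)) * indicator {..-s} x" for x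
  have [measurable]: "right \<in> borel_measurable borel" "left \<in> borel_measurable borel"
    unfolding right_def left_def by measurable
  have pointwise: "ennreal (std_normal_density x) * indicator {x. s \<le> \<bar>x\<bar>} x
        \<le> exp (- s\<^sup>2 / 2) * (right x + left x)" for x
  proof (cases "s \<le> \<bar>x\<bar>")
    case True
    have "std_normal_density (\<bar>x\<bar> - s) \<le> right x + left x"
    proof (cases "0 \<le> x")
      case False
      then have "std_normal_density (\<bar>x\<bar> - s) = std_normal_density (x + s)"
        by (simp add: std_normal_density_def power2_eq_square algebra_simps)
      with True False show ?thesis by (simp add: right_def left_def)
    qed (use True in \<open>simp add: right_def left_def\<close>)
    then have "ennreal (exp (- s\<^sup>2 / 2) * std_normal_density (\<bar>x\<bar> - s))
        \<le> exp (- s\<^sup>2 / 2) * (right x + left x)"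
      by (simp add: ennreal_mult' mult_left_mono)
    with ennreal_leI[OF std_normal_density_shift_le[OF assms True]]
    have "ennreal (std_normal_density x) \<le> exp (- s\<^sup>2 / 2) * (right x + left x)"
      by (rule order.trans)
    with True show ?thesis by simp
  qed (simp add: right_def left_def)
  have "(\<integral>\<^sup>+x. ennreal (std_normal_density x) * indicator {x. s \<le> \<bar>x\<bar>} x \<partial>lborel)
      \<le> (\<integral>\<^sup>+x. exp (- s\<^sup>2 / 2) * (right x + left x) \<partial>lborel)"
    by (intro nn_integral_mono pointwise)
  also have "\<dots> = exp (- s\<^sup>2 / 2) * ((\<integral>\<^sup>+x. right x \<partial>lborel) + (\<integral>\<^sup>+x. left x \<partial>lborel))"
    by (simp add: nn_integral_cmult nn_integral_add right_def left_def)
  also have "(\<integral>\<^sup>+x. right x \<partial>lborel) = (\<integral>\<^sup>+x. ennreal (std_normal_density x) * indicator {0..} x \<partial>lborel)"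
    using nn_integral_real_affine[of right 1 s] by (simp add: right_def indicator_def)
  also have "(\<integral>\<^sup>+x. left x \<partial>lborel) = (\<integral>\<^sup>+x. ennreal (std_normal_density x) * indicator {..0} x \<partial>lborel)"
    using nn_integral_real_affine[of left 1 "-s"] by (simp add: left_def indicator_def)
  finally show ?thesis
    by (simp add: nn_integral_std_normal_halves)
qed

lemma nn_integral_std_normal_exp_square:
  fixes l :: real
  assumes "l < 1 / 2"
  shows "(\<integral>\<^sup>+x. ennreal (std_normal_density x) * exp (l * x\<^sup>2) \<partial>lborel) = 1 / sqrt (1 - 2 * l)"
proof -
  define \<sigma> where "\<sigma> = 1 / sqrt (1 - 2 * l)"
  have "0 < 1 - 2 * l" using assms by simp
  then have "0 < \<sigma>" and \<sigma>_sq: "\<sigma>\<^sup>2 = 1 / (1 - 2 * l)"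
    by (simp_all add: \<sigma>_def power_divide)
  have density_eq: "std_normal_density x * exp (l * x\<^sup>2) = \<sigma> * normal_density 0 \<sigma> x" for x
  proof -
    have "exp (- x\<^sup>2 / 2) * exp (l * x\<^sup>2) = exp (- x\<^sup>2 / (2 * \<sigma>\<^sup>2))"
      using \<open>0 < 1 - 2 * l\<close> by (simp add: \<sigma>_sq field_simps flip: exp_add)
    moreover have "1 / sqrt (2 * pi) = \<sigma> / sqrt (2 * pi * \<sigma>\<^sup>2)"
      using \<open>0 < \<sigma>\<close> by (simp add: real_sqrt_mult)
    ultimately show ?thesis
      by (simp add: std_normal_density_def normal_density_def)
  qed
  have "(\<integral>\<^sup>+x. ennreal (std_normal_density x) * exp (l * x\<^sup>2) \<partial>lborel)
      = (\<integral>\<^sup>+x. \<sigma> * ennreal (normal_density 0 \<sigma> x) \<partial>lborel)"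
    using \<open>0 < \<sigma>\<close> by (intro nn_integral_cong) (simp add: density_eq flip: ennreal_mult')
  also have "\<dots> = \<sigma>"
    using \<open>0 < \<sigma>\<close>
    by (simp add: nn_integral_cmult nn_integral_eq_integral)
  finally show ?thesis by (simp add: \<sigma>_def)
qed

lemma (in prob_space) indep_vars_reindex:
  assumes indep: "indep_vars M' X (f ` I)" and inj: "inj_on f I"
  shows "indep_vars (\<lambda>i. M' (f i)) (\<lambda>i. X (f i)) I"
proof -
  let ?G = "\<lambda>j. {X j -` B \<inter> space M |B. B \<in> sets (M' j)}"
  have rv: "\<forall>j\<in>f ` I. random_variable (M' j) (X j)" and sets: "indep_sets ?G (f ` I)"
    using indep unfolding indep_vars_def2 by auto
  have "indep_sets (\<lambda>i. ?G (f i)) I"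
    unfolding indep_sets_def
  proof (intro conjI ballI allI impI)
    fix i assume "i \<in> I"
    then show "?G (f i) \<subseteq> events" using sets unfolding indep_sets_def by auto
  next
    fix J A assume J: "J \<subseteq> I" "J \<noteq> {}" "finite J" and A: "A \<in> Pi J (\<lambda>i. ?G (f i))"
    define A' where "A' j = A (the_inv_into I f j)" for j
    have inv: "the_inv_into I f (f i) = i" if "i \<in> J" for i
      using that J inj by (auto intro: the_inv_into_f_f)
    have "\<forall>j\<in>f ` J. A' j \<in> ?G j" using A by (auto simp: A'_def inv)
    then have "prob (\<Inter>j\<in>f ` J. A' j) = (\<Prod>j\<in>f ` J. prob (A' j))"
      using J by (intro indep_setsD[OF sets]) auto
    moreover have "inj_on f J" using inj J(1) by (rule inj_on_subset)
    ultimately show "prob (\<Inter>i\<in>J. A i) = (\<Prod>i\<in>J. prob (A i))"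
      by (simp add: A'_def inv prod.reindex)
  qed
  with rv show ?thesis unfolding indep_vars_def2 by auto
qed

lemma (in prob_space) indep_vars_Pair_slice:
  assumes "indep_vars M' Z (A \<times> I)" "b \<in> A"
  shows "indep_vars (\<lambda>i. M' (b, i)) (\<lambda>i. Z (b, i)) I"
proof -
  have "indep_vars M' Z (Pair b ` I)"
    using assms(2) by (intro indep_vars_subset[OF assms(1)]) auto
  then show ?thesis
    by (rule indep_vars_reindex[where f = "Pair b"]) (simp add: inj_on_def)
qed

lemma (in prob_space) indep_var_emeasure_le_conditioning:
  fixes c :: ennreal
  assumes indep: "indep_var N Y N' X" and S: "S \<in> sets (N \<Otimes>\<^sub>M N')" and Q: "Q \<in> sets N"
    and bound: "\<And>y. y \<in> space N \<Longrightarrow> y \<notin> Q \<Longrightarrow> emeasure M {\<omega> \<in> space M. (y, X \<omega>) \<in> S} \<le> c"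
  shows "emeasure M {\<omega> \<in> space M. (Y \<omega>, X \<omega>) \<in> S} \<le> emeasure M {\<omega> \<in> space M. Y \<omega> \<in> Q} + c"
proof -
  have [measurable]: "Y \<in> measurable M N" "X \<in> measurable M N'"
    using indep by (auto dest: indep_var_rv1 indep_var_rv2)
  interpret DX: prob_space "distr M N' X" by (rule prob_space_distr) simp
  interpret DY: prob_space "distr M N Y" by (rule prob_space_distr) simp
  have section_bound: "emeasure (distr M N' X) (Pair y -` S) \<le> indicator Q y + c"
    if "y \<in> space N" for y
  proof (cases "y \<in> Q")
    case True
    have "emeasure (distr M N' X) (Pair y -` S) \<le> 1" by (rule DX.emeasure_le_1)
    then show ?thesis using True by (simp add: add_increasing2)
  next
    case False
    have "emeasure (distr M N' X) (Pair y -` S) = emeasure M {\<omega> \<in> space M. (y, X \<omega>) \<in> S}"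
      using S that by (subst emeasure_distr) (auto intro: arg_cong[where f="emeasure M"])
    then show ?thesis using bound[OF that False] False by simp
  qed
  have "emeasure M {\<omega> \<in> space M. (Y \<omega>, X \<omega>) \<in> S} = emeasure (distr M (N \<Otimes>\<^sub>M N') (\<lambda>\<omega>. (Y \<omega>, X \<omega>))) S"
    using S by (subst emeasure_distr) (auto intro: arg_cong[where f="emeasure M"])
  also have "\<dots> = emeasure (distr M N Y \<Otimes>\<^sub>M distr M N' X) S"
    using indep by (simp add: indep_var_distribution_eq)
  also have "\<dots> = (\<integral>\<^sup>+y. emeasure (distr M N' X) (Pair y -` S) \<partial>distr M N Y)"
    using S by (intro DX.emeasure_pair_measure_alt) simp
  also have "\<dots> \<le> (\<integral>\<^sup>+y. indicator Q y + c \<partial>distr M N Y)"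
    using section_bound by (intro nn_integral_mono) simp
  also have "\<dots> = emeasure (distr M N Y) Q + c"
    using Q by (simp add: nn_integral_add DY.emeasure_space_1[simplified])
  also have "emeasure (distr M N Y) Q = emeasure M {\<omega> \<in> space M. Y \<omega> \<in> Q}"
    using Q by (subst emeasure_distr) (auto intro: arg_cong[where f="emeasure M"])
  finally show ?thesis .
qed

lemma (in prob_space) normal_distributed_abs_tail:
  assumes W: "distributed M lborel W (normal_density 0 \<sigma>)" and "0 < \<sigma>" "0 \<le> a"
  shows "emeasure M {\<omega> \<in> space M. a \<le> \<bar>W \<omega>\<bar>} \<le> exp (- a\<^sup>2 / (2 * \<sigma>\<^sup>2))"
proof -
  have std: "distributed M lborel (\<lambda>\<omega>. W \<omega> / \<sigma>) std_normal_density"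
    using normal_standard_normal_convert[OF \<open>0 < \<sigma>\<close>, of W 0] W by simp
  have "{\<omega> \<in> space M. a \<le> \<bar>W \<omega>\<bar>} = (\<lambda>\<omega>. W \<omega> / \<sigma>) -` {x. a / \<sigma> \<le> \<bar>x\<bar>} \<inter> space M"
    using \<open>0 < \<sigma>\<close> by (auto simp: field_simps)
  also have "emeasure M \<dots> = (\<integral>\<^sup>+x. ennreal (std_normal_density x) * indicator {x. a / \<sigma> \<le> \<bar>x\<bar>} x \<partial>lborel)"
    by (rule distributed_emeasure[OF std]) simp
  also have "\<dots> \<le> exp (- (a / \<sigma>)\<^sup>2 / 2)"
    using assms by (intro nn_integral_std_normal_tail) simp
  finally show ?thesis by (simp add: power_divide mult.commute)
qed

lemma (in prob_space) weighted_sum_std_normal_distributed: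
  assumes "finite I" and indep: "indep_vars (\<lambda>_. borel) X I"
    and std: "\<And>i. i \<in> I \<Longrightarrow> distributed M lborel (X i) std_normal_density"
    and pos: "0 < (\<Sum>i\<in>I. (a i)\<^sup>2)"
  shows "distributed M lborel (\<lambda>\<omega>. \<Sum>i\<in>I. a i * X i \<omega>) (normal_density 0 (sqrt (\<Sum>i\<in>I. (a i)\<^sup>2)))"
proof -
  define J where "J = {i \<in> I. a i \<noteq> 0}"
  have "finite J" "J \<subseteq> I" using \<open>finite I\<close> by (auto simp: J_def)
  have sum_J: "(\<Sum>i\<in>I. f i) = (\<Sum>i\<in>J. f i)" if "\<And>i. a i = 0 \<Longrightarrow> f i = 0" for f :: "_ \<Rightarrow> real"
    using \<open>finite I\<close> that by (intro sum.mono_neutral_right) (auto simp: J_def)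
  have "J \<noteq> {}" using pos sum_J[of "\<lambda>i. (a i)\<^sup>2"] by auto
  have "indep_vars (\<lambda>_. borel) (\<lambda>i \<omega>. a i * X i \<omega>) J"
    using indep_vars_subset[OF indep \<open>J \<subseteq> I\<close>] by (rule indep_vars_compose2) simp
  moreover have "distributed M lborel (\<lambda>\<omega>. a i * X i \<omega>) (normal_density 0 \<bar>a i\<bar>)" if "i \<in> J" for i
    using normal_density_affine[OF std, of i "a i" 0] that by (auto simp: J_def)
  ultimately have "distributed M lborel (\<lambda>\<omega>. \<Sum>i\<in>J. a i * X i \<omega>)
      (normal_density (\<Sum>i\<in>J. 0) (sqrt (\<Sum>i\<in>J. \<bar>a i\<bar>\<^sup>2)))"
    using \<open>finite J\<close> \<open>J \<noteq> {}\<close> by (intro sum_indep_normal) (auto simp: J_def)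
  then show ?thesis by (simp add: sum_J)
qed

lemma (in prob_space) weighted_sum_std_normal_tail:
  assumes "finite I" and indep: "indep_vars (\<lambda>_. borel) X I"
    and std: "\<And>i. i \<in> I \<Longrightarrow> distributed M lborel (X i) std_normal_density"
    and "0 < t" and le_R: "(\<Sum>i\<in>I. (a i)\<^sup>2) \<le> R"
  shows "emeasure M {\<omega> \<in> space M. t \<le> \<bar>\<Sum>i\<in>I. a i * X i \<omega>\<bar>} \<le> exp (- t\<^sup>2 / (2 * R))"
proof (cases "(\<Sum>i\<in>I. (a i)\<^sup>2) = 0")
  case True
  then have "\<forall>i\<in>I. a i = 0" using \<open>finite I\<close> by (simp add: sum_nonneg_eq_0_iff)
  then show ?thesis using \<open>0 < t\<close> by simp
next
  case False
  define \<sigma> where "\<sigma> = sqrt (\<Sum>i\<in>I. (a i)\<^sup>2)"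
  have "0 < (\<Sum>i\<in>I. (a i)\<^sup>2)" using False by (simp add: order_neq_le_trans sum_nonneg)
  then have "0 < \<sigma>" "\<sigma>\<^sup>2 \<le> R" using le_R by (simp_all add: \<sigma>_def)
  have "emeasure M {\<omega> \<in> space M. t \<le> \<bar>\<Sum>i\<in>I. a i * X i \<omega>\<bar>} \<le> exp (- t\<^sup>2 / (2 * \<sigma>\<^sup>2))"
    using weighted_sum_std_normal_distributed[OF assms(1-3) \<open>0 < (\<Sum>i\<in>I. (a i)\<^sup>2)\<close>] \<open>0 < \<sigma>\<close> \<open>0 < t\<close>
    by (intro normal_distributed_abs_tail) (simp_all add: \<sigma>_def)
  also have "exp (- t\<^sup>2 / (2 * \<sigma>\<^sup>2)) \<le> exp (- t\<^sup>2 / (2 * R))"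
    using \<open>0 < \<sigma>\<close> \<open>\<sigma>\<^sup>2 \<le> R\<close> by (simp add: frac_le)
  finally show ?thesis by (simp add: ennreal_leI)
qed

lemma (in prob_space) nn_integral_exp_sum_squares_std_normal:
  assumes "finite I" and indep: "indep_vars (\<lambda>_. borel) Y I"
    and std: "\<And>i. i \<in> I \<Longrightarrow> distributed M lborel (Y i) std_normal_density"
    and "l < 1 / 2"
  shows "(\<integral>\<^sup>+\<omega>. exp (l * (\<Sum>i\<in>I. (Y i \<omega>)\<^sup>2)) \<partial>M) = (1 / sqrt (1 - 2 * l)) ^ card I"
proof -
  have "(\<integral>\<^sup>+\<omega>. exp (l * (\<Sum>i\<in>I. (Y i \<omega>)\<^sup>2)) \<partial>M) = (\<integral>\<^sup>+\<omega>. (\<Prod>i\<in>I. ennreal (exp (l * (Y i \<omega>)\<^sup>2))) \<partial>M)"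
    using \<open>finite I\<close> by (simp add: sum_distrib_left exp_sum prod_ennreal)
  also have "\<dots> = (\<Prod>i\<in>I. \<integral>\<^sup>+\<omega>. exp (l * (Y i \<omega>)\<^sup>2) \<partial>M)"
    by (intro indep_vars_nn_integral \<open>finite I\<close> indep_vars_compose2[OF indep]) auto
  also have "\<dots> = (\<Prod>i\<in>I. ennreal (1 / sqrt (1 - 2 * l)))"
  proof (rule prod.cong)
    fix i assume "i \<in> I"
    have "(\<integral>\<^sup>+\<omega>. exp (l * (Y i \<omega>)\<^sup>2) \<partial>M)
        = (\<integral>\<^sup>+x. ennreal (std_normal_density x) * exp (l * x\<^sup>2) \<partial>lborel)"
      by (rule distributed_nn_integral[OF std[OF \<open>i \<in> I\<close>], symmetric]) simp
    then show "(\<integral>\<^sup>+\<omega>. exp (l * (Y i \<omega>)\<^sup>2) \<partial>M) = ennreal (1 / sqrt (1 - 2 * l))"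
      using nn_integral_std_normal_exp_square[OF \<open>l < 1 / 2\<close>] by simp
  qed simp
  finally show ?thesis using \<open>l < 1 / 2\<close> by (simp add: ennreal_power)
qed

lemma (in prob_space) chi_square_upper_tail:
  fixes \<epsilon> :: real
  assumes "finite I" and indep: "indep_vars (\<lambda>_. borel) Y I"
    and std: "\<And>i. i \<in> I \<Longrightarrow> distributed M lborel (Y i) std_normal_density"
    and "0 < \<epsilon>" "\<epsilon> < 1"
  shows "emeasure M {\<omega> \<in> space M. card I / (1 - \<epsilon>) \<le> (\<Sum>i\<in>I. (Y i \<omega>)\<^sup>2)}
         \<le> exp (- \<epsilon>\<^sup>2 * card I / 4)"
proof -
  define k where "k = real (card I)"
  have [measurable]: "Y i \<in> borel_measurable M" if "i \<in> I" for i
    using indep that unfolding indep_vars_def by simp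
  have "emeasure M {\<omega> \<in> space M. k / (1 - \<epsilon>) \<le> (\<Sum>i\<in>I. (Y i \<omega>)\<^sup>2)}
      \<le> exp (- (\<epsilon> / 2) * (k / (1 - \<epsilon>)))
        * (\<integral>\<^sup>+\<omega>. ennreal (exp (\<epsilon> / 2 * (\<Sum>i\<in>I. (Y i \<omega>)\<^sup>2))) * indicator (space M) \<omega> \<partial>M)"
    using \<open>0 < \<epsilon>\<close> by (intro Chernoff_ineq_nn_integral_ge) auto
  also have "(\<integral>\<^sup>+\<omega>. ennreal (exp (\<epsilon> / 2 * (\<Sum>i\<in>I. (Y i \<omega>)\<^sup>2))) * indicator (space M) \<omega> \<partial>M)
      = (\<integral>\<^sup>+\<omega>. exp (\<epsilon> / 2 * (\<Sum>i\<in>I. (Y i \<omega>)\<^sup>2)) \<partial>M)"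
    by (intro nn_integral_cong) simp
  also have "\<dots> = (1 / sqrt (1 - \<epsilon>)) ^ card I"
    using nn_integral_exp_sum_squares_std_normal[OF assms(1-3), of "\<epsilon> / 2"] \<open>\<epsilon> < 1\<close> by simp
  also have "(1 / sqrt (1 - \<epsilon>)) ^ card I = exp (- k * ln (1 - \<epsilon>) / 2)"
  proof -
    have "1 / sqrt (1 - \<epsilon>) = exp (- ln (1 - \<epsilon>) / 2)"
      using assms(5) by (simp add: powr_half_sqrt[symmetric] powr_def exp_minus field_simps)
    then show ?thesis by (simp add: k_def flip: exp_of_nat_mult)
  qed
  also have "ennreal (exp (- (\<epsilon> / 2) * (k / (1 - \<epsilon>)))) * ennreal (exp (- k * ln (1 - \<epsilon>) / 2))
      = exp (- (\<epsilon> / 2) * (k / (1 - \<epsilon>)) - k * ln (1 - \<epsilon>) / 2)"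
    by (simp add: exp_add[symmetric] ennreal_mult'[symmetric])
  also have "\<dots> \<le> exp (- \<epsilon>\<^sup>2 * k / 4)"
  proof (intro ennreal_leI exp_mono)
    have "k * (\<epsilon>\<^sup>2 / 2 - \<epsilon> / (1 - \<epsilon>)) \<le> k * ln (1 - \<epsilon>)"
      using ln_one_minus_lower_bound[of \<epsilon>] assms(4,5) by (intro mult_left_mono) (auto simp: k_def)
    then show "- (\<epsilon> / 2) * (k / (1 - \<epsilon>)) - k * ln (1 - \<epsilon>) / 2 \<le> - \<epsilon>\<^sup>2 * k / 4"
      using assms(4,5) by (simp add: field_simps)
  qed
  finally show ?thesis by (simp add: k_def)
qed

lemma (in prob_space) inner_product_tail_le:
  fixes X Y :: "'i \<Rightarrow> 'a \<Rightarrow> real"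
  assumes "finite I"
    and indep: "indep_vars (\<lambda>_. borel) (\<lambda>(b, i). if b then X i else Y i) (UNIV \<times> I)"
    and std: "\<And>i. i \<in> I \<Longrightarrow> distributed M lborel (X i) std_normal_density"
    and "0 < t"
  shows "emeasure M {\<omega> \<in> space M. t \<le> \<bar>\<Sum>i\<in>I. X i \<omega> * Y i \<omega>\<bar>}
         \<le> emeasure M {\<omega> \<in> space M. R \<le> (\<Sum>i\<in>I. (Y i \<omega>)\<^sup>2)} + exp (- t\<^sup>2 / (2 * R))"
proof -
  define Z where "Z = (\<lambda>(b, i). if b then X i else Y i)"
  define PX where "PX = PiM ({True} \<times> I) (\<lambda>_. borel :: real measure)"
  define PY where "PY = PiM ({False} \<times> I) (\<lambda>_. borel :: real measure)"
  define x where "x \<omega> = restrict (\<lambda>j. Z j \<omega>) ({True} \<times> I)" for \<omega>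
  define y where "y \<omega> = restrict (\<lambda>j. Z j \<omega>) ({False} \<times> I)" for \<omega>
  define S where "S = {p \<in> space (PY \<Otimes>\<^sub>M PX). t \<le> \<bar>\<Sum>i\<in>I. snd p (True, i) * fst p (False, i)\<bar>}"
  define Q where "Q = {v \<in> space PY. R \<le> (\<Sum>i\<in>I. (v (False, i))\<^sup>2)}"
  have indep_xy: "indep_var PY y PX x"
    using indep_var_restrict[of "\<lambda>_. borel" Z "UNIV \<times> I" "{False} \<times> I" "{True} \<times> I"] indep
    by (auto simp: PX_def PY_def x_def[abs_def] y_def[abs_def] Z_def)
  have [measurable]: "y \<in> measurable M PY" "x \<in> measurable M PX"
    using indep_xy by (auto dest: indep_var_rv1 indep_var_rv2)
  have "S \<in> sets (PY \<Otimes>\<^sub>M PX)" "Q \<in> sets PY"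
    unfolding S_def Q_def PX_def PY_def by measurable
  have indep_X: "indep_vars (\<lambda>_. borel) X I"
    using indep_vars_Pair_slice[OF indep, of True] by simp
  have "emeasure M {\<omega> \<in> space M. (y \<omega>, x \<omega>) \<in> S}
      \<le> emeasure M {\<omega> \<in> space M. y \<omega> \<in> Q} + exp (- t\<^sup>2 / (2 * R))"
  proof (rule indep_var_emeasure_le_conditioning[OF indep_xy \<open>S \<in> _\<close> \<open>Q \<in> _\<close>])
    fix v assume "v \<in> space PY" "v \<notin> Q"
    then have "(\<Sum>i\<in>I. (v (False, i))\<^sup>2) \<le> R" by (auto simp: Q_def)
    moreover have "{\<omega> \<in> space M. (v, x \<omega>) \<in> S} = {\<omega> \<in> space M. t \<le> \<bar>\<Sum>i\<in>I. v (False, i) * X i \<omega>\<bar>}"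
      using \<open>v \<in> space PY\<close> measurable_space[OF \<open>x \<in> measurable M PX\<close>]
      by (auto simp: S_def space_pair_measure x_def Z_def mult.commute)
    ultimately show "emeasure M {\<omega> \<in> space M. (v, x \<omega>) \<in> S} \<le> exp (- t\<^sup>2 / (2 * R))"
      using weighted_sum_std_normal_tail[OF \<open>finite I\<close> indep_X std \<open>0 < t\<close>] by simp
  qed
  also have "{\<omega> \<in> space M. (y \<omega>, x \<omega>) \<in> S} = {\<omega> \<in> space M. t \<le> \<bar>\<Sum>i\<in>I. X i \<omega> * Y i \<omega>\<bar>}"
    using measurable_space[OF measurable_Pair[OF \<open>y \<in> measurable M PY\<close> \<open>x \<in> measurable M PX\<close>]]
    by (auto simp: S_def x_def y_def Z_def)
  also have "{\<omega> \<in> space M. y \<omega> \<in> Q} = {\<omega> \<in> space M. R \<le> (\<Sum>i\<in>I. (Y i \<omega>)\<^sup>2)}"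
    using measurable_space[OF \<open>y \<in> measurable M PY\<close>] by (auto simp: Q_def y_def Z_def)
  finally show ?thesis .
qed

theorem lemma5:
  fixes M :: "'a measure" and X Y :: "nat \<Rightarrow> 'a \<Rightarrow> real"
    and n :: nat and \<epsilon> :: real
  assumes "prob_space M"
    and "prob_space.indep_vars M (\<lambda>_. borel)
           (\<lambda>(b, i). if b then X i else Y i) (UNIV \<times> {..<n})"
    and "\<And>i. i < n \<Longrightarrow> distributed M lborel (X i) std_normal_density"
    and "\<And>i. i < n \<Longrightarrow> distributed M lborel (Y i) std_normal_density"
    and "0 < \<epsilon>" and "\<epsilon> < 1"
  shows "prob_space.prob M
           {\<omega> \<in> space M. \<bar>\<Sum>i<n. X i \<omega> * Y i \<omega>\<bar> \<ge> sqrt (real n powr (3/2) / (1 - \<epsilon>))}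
         \<le> exp (- sqrt (real n) / 2) + 2 * exp (- \<epsilon>\<^sup>2 * real n / 4)"
proof -
  interpret prob_space M by fact
  define t where "t = sqrt (real n powr (3/2) / (1 - \<epsilon>))"
  define R where "R = real n / (1 - \<epsilon>)"
  show ?thesis
  proof (cases "n = 0")
    case True
    then show ?thesis by (simp add: prob_space)
  next
    case False
    have "0 < t" using False assms(6) by (simp add: t_def)
    have "real n powr (3/2) = real n powr (1 + 1/2)" by simp
    also have "\<dots> = real n * sqrt (real n)" by (subst powr_add) (simp add: powr_half_sqrt)
    finally have exponent: "t\<^sup>2 / (2 * R) = sqrt (real n) / 2"
      using False assms(6) by (simp add: t_def R_def)
    have "emeasure M {\<omega> \<in> space M. t \<le> \<bar>\<Sum>i<n. X i \<omega> * Y i \<omega>\<bar>}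
        \<le> emeasure M {\<omega> \<in> space M. R \<le> (\<Sum>i<n. (Y i \<omega>)\<^sup>2)} + exp (- t\<^sup>2 / (2 * R))"
      using assms(2,3) \<open>0 < t\<close> by (intro inner_product_tail_le) auto
    also have "emeasure M {\<omega> \<in> space M. R \<le> (\<Sum>i<n. (Y i \<omega>)\<^sup>2)} \<le> exp (- \<epsilon>\<^sup>2 * real n / 4)"
      using chi_square_upper_tail[of "{..<n}" Y \<epsilon>] indep_vars_Pair_slice[OF assms(2), of False]
        assms(4-6) by (simp add: R_def)
    finally have "prob {\<omega> \<in> space M. t \<le> \<bar>\<Sum>i<n. X i \<omega> * Y i \<omega>\<bar>}
        \<le> exp (- \<epsilon>\<^sup>2 * real n / 4) + exp (- sqrt (real n) / 2)"
      by (simp add: exponent emeasure_eq_measure flip: ennreal_plus)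
    moreover have "0 \<le> exp (- \<epsilon>\<^sup>2 * real n / 4)" by simp
    ultimately show ?thesis unfolding t_def by linarith
  qed
qed

end
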